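(* Let $n\ge 3$, $q=\frac{2n}{n-2}$, $\kappa=\frac{n-1}{n}$. Identify $S^1$ with $[-\pi,\pi]$ with endpoints identified, and let $\lambda=-1$ on $(-\pi,0)$, $\lambda=1$ on $(0,\pi)$. For $t\in\mathbb{R}$ let $\tau_t=t+\lambda$. Let $N$ be a smooth positive function on $S^1$ and $\eta,\mu\in\mathbb{R}$. Suppose $(\phi,w)\in W^{2,\infty}_+(S^1)\times W^{1,\infty}(S^1)$ solves $$-2\kappa q\,\phi''-2\eta^2\phi^{-q-1}-\kappa\Big(\mu+\tfrac{1}{2N}w'\Big)^2\phi^{-q-1}+\kappa\tau_t^2\phi^{q-1}=0,\qquad \Big(\tfrac{1}{2N}w'\Big)'-\phi^q\tau_t'=0.$$ Let $\gamma_N=-\frac{\int_{S^1}\lambda N}{\int_{S^1}N}$. Then $$\frac{1}{2N}w'=\phi(0)^q\,[\lambda+\gamma_N].$$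
   Context: Here $\tau_t'=2(\delta_0-\delta_\pi)$ is the distributional derivative ($\delta_x$ the Dirac mass at $x$), the second equation is understood in the sense of distributions, and the subscript $+$ denotes positive functions. *)

theory Defs
  imports "HOL-Analysis.Analysis"
begin

text \<open>Functions on S^1 are represented as 2*pi-periodic functions on the real line.\<close>

definition periodic2pi :: "(real \<Rightarrow> real) \<Rightarrow> bool" where
  "periodic2pi f \<longleftrightarrow> (\<forall>x. f (x + 2 * pi) = f x)"

definition smooth_fun :: "(real \<Rightarrow> real) \<Rightarrow> bool" where
  "smooth_fun f \<longleftrightarrow> (\<forall>k x. ((deriv ^^ k) f) differentiable (at x))"

text \<open>g is a weak derivative of f lying in L-infinity: g is measurable, essentially
  bounded and f is the indefinite integral of g (so f is locally absolutely continuous).\<close>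
definition weak_deriv_Linf :: "(real \<Rightarrow> real) \<Rightarrow> (real \<Rightarrow> real) \<Rightarrow> bool" where
  "weak_deriv_Linf f g \<longleftrightarrow> g \<in> borel_measurable lborel \<and>
     (\<exists>B. AE x in lborel. \<bar>g x\<bar> \<le> B) \<and>
     (\<forall>a b. f b - f a = (LBINT x=a..b. g x))"

text \<open>lambda: -1 on (-pi,0), 1 on (0,pi) (mod 2 pi); value at the points 0, pi irrelevant.\<close>
definition lam :: "real \<Rightarrow> real" where
  "lam x = (let y = x - 2 * pi * of_int \<lfloor>(x + pi) / (2 * pi)\<rfloor> in
            if -pi < y \<and> y < 0 then -1 else if 0 < y \<and> y < pi then 1 else 0)"

end

theory Submission
  imports Defs
begin

(*
  Testing the weak form of the second equation with \<psi> = 1 gives \<phi>(pi)^q = \<phi>(0)^q =: A. Then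
  h = w'/(2N) - 2A 1_(0,pi) satisfies \<integral> h \<psi>' = 0 for all smooth 2pi-periodic \<psi>, the jumps of
  2A 1_(0,pi) at 0 and pi producing the right-hand side. Every smooth periodic function of mean zero
  is such a \<psi>', and smooth periodic functions approximate indicators of arcs boundedly, so h is
  a.e. constant on a period (a periodic du Bois-Reymond lemma): w'/(2N) = A \<lambda> + c there.
  Periodicity of w makes \<integral> w' vanish over a period, which forces c = A \<gamma>_N; finally
  w - \<integral>_0^x 2N (A \<lambda> + c) is periodic and constant on a period, so the identity holds everywhere.
*)

lemma real_differentiable_iff_field_differentiable:
  "(f :: real \<Rightarrow> real) differentiable (at x) \<longleftrightarrow> f field_differentiable (at x)"
  by (simp add: real_differentiable_def field_differentiable_def)

text \<open>\<open>differentiable_upto k f\<close> says that \<open>f\<close> is \<open>k + 1\<close> times differentiable on \<open>\<real>\<close>.\<close>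

definition differentiable_upto :: "nat \<Rightarrow> (real \<Rightarrow> real) \<Rightarrow> bool" where
  "differentiable_upto k f \<longleftrightarrow> (\<forall>j\<le>k. \<forall>x. ((deriv ^^ j) f) differentiable (at x))"

lemma smooth_fun_iff_differentiable_upto: "smooth_fun f \<longleftrightarrow> (\<forall>k. differentiable_upto k f)"
  unfolding smooth_fun_def differentiable_upto_def by blast

lemma differentiable_upto_0: "differentiable_upto 0 f \<longleftrightarrow> (\<forall>x. f differentiable (at x))"
  by (simp add: differentiable_upto_def)

lemma differentiable_upto_Suc:
  "differentiable_upto (Suc k) f \<longleftrightarrow>
     (\<forall>x. f differentiable (at x)) \<and> differentiable_upto k (deriv f)"
proof -
  have "(\<forall>j\<le>Suc k. P j) \<longleftrightarrow> P 0 \<and> (\<forall>j\<le>k. P (Suc j))" for P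
    by (metis Suc_le_mono not0_implies_Suc zero_le)
  then show ?thesis
    unfolding differentiable_upto_def by (simp add: funpow_Suc_right del: funpow.simps)
qed

lemma differentiable_upto_SucD: "differentiable_upto (Suc k) f \<Longrightarrow> differentiable_upto k f"
  by (simp add: differentiable_upto_def)

lemma differentiable_upto_isCont: "differentiable_upto k f \<Longrightarrow> isCont f x"
  by (auto simp: differentiable_upto_def differentiable_imp_continuous_within)

lemma differentiable_upto_const: "differentiable_upto k (\<lambda>x. c)"
  by (induction k arbitrary: c) (auto simp: differentiable_upto_0 differentiable_upto_Suc)

lemma differentiable_upto_ident: "differentiable_upto k (\<lambda>x. x)"
  by (cases k) (auto simp: differentiable_upto_0 differentiable_upto_Suc differentiable_upto_const)

lemma differentiable_upto_add:
  "differentiable_upto k f \<Longrightarrow> differentiable_upto k g \<Longrightarrow> differentiable_upto k (\<lambda>x. f x + g x)"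
proof (induction k arbitrary: f g)
  case 0
  then show ?case by (simp add: differentiable_upto_0)
next
  case (Suc k)
  then have "\<And>x. f differentiable (at x)" "\<And>x. g differentiable (at x)"
    by (auto simp: differentiable_upto_Suc)
  then have "deriv (\<lambda>x. f x + g x) = (\<lambda>x. deriv f x + deriv g x)"
    by (auto simp: real_differentiable_iff_field_differentiable)
  with Suc show ?case by (auto simp: differentiable_upto_Suc)
qed

lemma differentiable_upto_mult:
  "differentiable_upto k f \<Longrightarrow> differentiable_upto k g \<Longrightarrow> differentiable_upto k (\<lambda>x. f x * g x)"
proof (induction k arbitrary: f g)
  case 0
  then show ?case by (simp add: differentiable_upto_0)
next
  case (Suc k)
  then have "\<And>x. f differentiable (at x)" "\<And>x. g differentiable (at x)"
    by (auto simp: differentiable_upto_Suc)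
  then have d: "deriv (\<lambda>x. f x * g x) = (\<lambda>x. f x * deriv g x + deriv f x * g x)"
    by (auto simp: real_differentiable_iff_field_differentiable)
  have "differentiable_upto k f" "differentiable_upto k g"
    using Suc.prems by (auto dest: differentiable_upto_SucD)
  moreover have "differentiable_upto k (deriv f)" "differentiable_upto k (deriv g)"
    using Suc.prems by (auto simp: differentiable_upto_Suc)
  ultimately have "differentiable_upto k (\<lambda>x. f x * deriv g x + deriv f x * g x)"
    by (intro differentiable_upto_add Suc.IH)
  with Suc.prems show ?case by (auto simp: differentiable_upto_Suc d)
qed

lemma differentiable_upto_compose:
  "differentiable_upto k f \<Longrightarrow> differentiable_upto k g \<Longrightarrow> differentiable_upto k (\<lambda>x. f (g x))"
proof (induction k arbitrary: f)
  case 0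
  then show ?case
    using differentiable_chain_at[of g _ f] by (simp add: differentiable_upto_0 o_def)
next
  case (Suc k)
  then have df: "\<And>x. f differentiable (at x)" and dg: "\<And>x. g differentiable (at x)"
    by (auto simp: differentiable_upto_Suc)
  then have "deriv (\<lambda>x. f (g x)) = (\<lambda>x. deriv f (g x) * deriv g x)"
    using deriv_chain[of g _ f] by (auto simp: real_differentiable_iff_field_differentiable o_def)
  moreover have "differentiable_upto k (\<lambda>x. deriv f (g x) * deriv g x)"
  proof (rule differentiable_upto_mult)
    have "differentiable_upto k (deriv f)"
      using Suc.prems(1) by (simp add: differentiable_upto_Suc)
    then show "differentiable_upto k (\<lambda>x. deriv f (g x))"
      using differentiable_upto_SucD[OF Suc.prems(2)] by (rule Suc.IH)
    show "differentiable_upto k (deriv g)"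
      using Suc.prems by (simp add: differentiable_upto_Suc)
  qed
  moreover have "(\<lambda>x. f (g x)) differentiable (at x)" for x
    using differentiable_chain_at[of g x f] df dg by (simp add: o_def)
  ultimately show ?case by (auto simp: differentiable_upto_Suc)
qed

lemma differentiable_upto_antiderivative:
  assumes "\<And>x. (F has_real_derivative f x) (at x)" and "differentiable_upto k f"
  shows "differentiable_upto (Suc k) F"
proof -
  have "deriv F = f" using assms(1) by (simp add: fun_eq_iff DERIV_imp_deriv)
  with assms show ?thesis
    by (auto simp: differentiable_upto_Suc real_differentiable_def)
qed

lemma differentiable_upto_cos: "differentiable_upto k cos"
proof -
  have "differentiable_upto k sin \<and> differentiable_upto k cos"
  proof (induction k)
    case 0
    then show ?case by (auto simp: differentiable_upto_0 real_differentiable_def intro: DERIV_sin DERIV_cos)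
  next
    case (Suc k)
    then have "differentiable_upto k (\<lambda>x. - 1 * sin x)"
      by (intro differentiable_upto_mult differentiable_upto_const) auto
    then have "differentiable_upto k (\<lambda>x. - sin x)" by simp
    with Suc show ?case
      by (auto intro!: differentiable_upto_antiderivative DERIV_sin DERIV_cos)
  qed
  then show ?thesis ..
qed

lemma has_real_derivative_tanh: "((tanh :: real \<Rightarrow> real) has_real_derivative 1 - tanh x ^ 2) (at x)"
  using has_field_derivative_tanh[OF _ DERIV_ident, of x UNIV] by simp

lemma differentiable_upto_tanh: "differentiable_upto k (tanh :: real \<Rightarrow> real)"
proof (induction k)
  case 0
  show ?case by (auto simp: differentiable_upto_0 real_differentiable_def intro: has_real_derivative_tanh)
next
  case (Suc k)
  have "differentiable_upto k (\<lambda>x. 1 + (- 1) * (tanh x * tanh x))"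
    by (rule differentiable_upto_add[OF differentiable_upto_const
          differentiable_upto_mult[OF differentiable_upto_const
            differentiable_upto_mult[OF Suc.IH Suc.IH]]])
  then have "differentiable_upto k (\<lambda>x. 1 - tanh x ^ 2)" by (simp add: power2_eq_square)
  then show ?case by (rule differentiable_upto_antiderivative[OF has_real_derivative_tanh])
qed

lemma smooth_fun_isCont: "smooth_fun f \<Longrightarrow> isCont f x"
  by (meson differentiable_upto_isCont smooth_fun_iff_differentiable_upto)

lemma smooth_fun_has_real_derivative:
  "smooth_fun f \<Longrightarrow> (f has_real_derivative deriv f x) (at x)"
  by (metis DERIV_deriv_iff_real_differentiable differentiable_upto_0 smooth_fun_iff_differentiable_upto)

lemma smooth_fun_isCont_deriv: "smooth_fun f \<Longrightarrow> isCont (deriv f) x"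
  by (metis differentiable_upto_Suc differentiable_upto_isCont smooth_fun_iff_differentiable_upto)

lemma borel_measurable_isCont: "(\<And>x. isCont f x) \<Longrightarrow> f \<in> borel_measurable borel"
  by (intro borel_measurable_continuous_onI continuous_at_imp_continuous_on) simp

definition locally_integrable :: "(real \<Rightarrow> real) \<Rightarrow> bool" where
  "locally_integrable f \<longleftrightarrow> (\<forall>a b. interval_lebesgue_integrable lborel (ereal a) (ereal b) f)"

lemma set_integrable_mult_bounded:
  fixes h k :: "real \<Rightarrow> real"
  assumes h: "set_integrable lborel S h" and k: "k \<in> borel_measurable borel"
    and bound: "\<And>x. x \<in> S \<Longrightarrow> \<bar>k x\<bar> \<le> C"
  shows "set_integrable lborel S (\<lambda>x. h x * k x)"
proof (rule set_integrable_bound[OF set_integrable_mult_right[OF h, of C]])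
  have "(\<lambda>x. indicator S x * h x) \<in> borel_measurable lborel"
    using h by (simp add: set_integrable_def borel_measurable_integrable)
  moreover have "k \<in> borel_measurable lborel" using k by simp
  ultimately have "(\<lambda>x. indicator S x * h x * k x) \<in> borel_measurable lborel"
    by (rule borel_measurable_times)
  then show "set_borel_measurable lborel S (\<lambda>x. h x * k x)"
    unfolding set_borel_measurable_def by (simp add: mult.assoc)
  show "AE x in lborel. x \<in> S \<longrightarrow> norm (h x * k x) \<le> norm (C * h x)"
  proof (intro AE_I2 impI)
    fix x assume "x \<in> S"
    then have "\<bar>k x\<bar> \<le> \<bar>C\<bar>" using bound[of x] by linarith
    then have "\<bar>h x\<bar> * \<bar>k x\<bar> \<le> \<bar>h x\<bar> * \<bar>C\<bar>"
      by (rule mult_left_mono) simp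
    then show "norm (h x * k x) \<le> norm (C * h x)"
      by (simp add: abs_mult mult.commute)
  qed
qed

lemma set_integrable_mult_isCont:
  fixes h k :: "real \<Rightarrow> real"
  assumes h: "set_integrable lborel {a<..<b} h" and k: "\<And>x. isCont k x"
  shows "set_integrable lborel {a<..<b} (\<lambda>x. h x * k x)"
proof -
  obtain C where "\<And>x. x \<in> {a..b} \<Longrightarrow> norm (k x) \<le> C"
    using continuous_on_compact_bound[of "{a..b}" k] k
    by (metis compact_Icc continuous_at_imp_continuous_on)
  then show ?thesis
    by (intro set_integrable_mult_bounded[OF h borel_measurable_isCont[OF k], of C]) auto
qed

lemma set_integrable_bounded_measurable:
  fixes f :: "real \<Rightarrow> real"
  assumes "f \<in> borel_measurable borel" "AE x in lborel. \<bar>f x\<bar> \<le> B"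
    and "S \<in> sets borel" "emeasure lborel S < \<infinity>"
  shows "set_integrable lborel S f"
  unfolding set_integrable_def
proof (rule Bochner_Integration.integrable_bound)
  show "integrable lborel (\<lambda>x. B * indicator S x)" using assms(3,4) by simp
  show "(\<lambda>x. indicator S x *\<^sub>R f x) \<in> borel_measurable lborel" using assms(1,3) by measurable
  show "AE x in lborel. norm (indicator S x *\<^sub>R f x) \<le> norm (B * indicator S x)"
    using assms(2) by eventually_elim (auto split: split_indicator)
qed

lemma locally_integrable_bounded_measurable:
  "f \<in> borel_measurable borel \<Longrightarrow> AE x in lborel. \<bar>f x\<bar> \<le> B \<Longrightarrow> locally_integrable f"
  unfolding locally_integrable_def interval_lebesgue_integrable_def
  by (auto intro: set_integrable_bounded_measurable)

lemma locally_integrable_isCont: "(\<And>x. isCont f x) \<Longrightarrow> locally_integrable f"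
  unfolding locally_integrable_def by (auto intro: interval_integrable_isCont)

lemma set_integrable_if_locally_integrable:
  fixes a b :: real
  assumes "locally_integrable f"
  shows "set_integrable lborel {a<..<b} f"
proof (cases "a \<le> b")
  case True
  have "interval_lebesgue_integrable lborel (ereal a) (ereal b) f"
    using assms unfolding locally_integrable_def by blast
  with True show ?thesis
    by (simp add: interval_lebesgue_integrable_def)
qed simp

lemma locally_integrable_diff:
  "locally_integrable f \<Longrightarrow> locally_integrable g \<Longrightarrow> locally_integrable (\<lambda>x. f x - g x)"
  by (simp add: locally_integrable_def)

lemma locally_integrable_mult_isCont:
  assumes "locally_integrable h" "\<And>x. isCont k x"
  shows "locally_integrable (\<lambda>x. h x * k x)"
  using set_integrable_mult_isCont[OF set_integrable_if_locally_integrable[OF assms(1)] assms(2)]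
  unfolding locally_integrable_def interval_lebesgue_integrable_def by simp

lemma weak_deriv_LinfD:
  assumes "weak_deriv_Linf w dw"
  shows "dw \<in> borel_measurable borel" and "locally_integrable dw"
    and "\<And>(a::real) (b::real). w b - w a = (LBINT x=a..b. dw x)"
proof -
  show meas: "dw \<in> borel_measurable borel"
    using assms by (simp add: weak_deriv_Linf_def)
  obtain B where "AE x in lborel. \<bar>dw x\<bar> \<le> B"
    using assms unfolding weak_deriv_Linf_def by blast
  then show "locally_integrable dw"
    by (rule locally_integrable_bounded_measurable[OF meas])
  show "\<And>a b. w b - w a = (LBINT x=a..b. dw x)"
    using assms unfolding weak_deriv_Linf_def by blast
qed

lemma locally_integrable_interval_integral_sum:
  fixes a b c :: real
  assumes "locally_integrable f"
  shows "(LBINT y=a..b. f y) + (LBINT y=b..c. f y) = (LBINT y=a..c. f y)"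
proof (rule interval_integral_sum)
  show "interval_lebesgue_integrable lborel (min (ereal a) (min (ereal b) (ereal c)))
      (max (ereal a) (max (ereal b) (ereal c))) f"
    using assms unfolding locally_integrable_def by (metis ereal_min ereal_max)
qed

lemma interval_integral_mult_indicator:
  fixes f :: "real \<Rightarrow> real" and l a b u :: real
  assumes "l \<le> a" "a \<le> b" "b \<le> u"
  shows "(LBINT x=l..u. f x * indicator {a<..<b} x) = (LBINT x=a..b. f x)"
proof -
  have "(LBINT x=l..u. f x * indicator {a<..<b} x) = (LBINT x:{l<..<u}. f x * indicator {a<..<b} x)"
    using assms by (simp add: interval_integral_Ioo)
  also have "\<dots> = (LBINT x:{a<..<b}. f x)"
    unfolding set_lebesgue_integral_def using assms
    by (intro Bochner_Integration.integral_cong) (auto split: split_indicator)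
  also have "\<dots> = (LBINT x=a..b. f x)"
    using assms by (simp add: interval_integral_Ioo)
  finally show ?thesis .
qed

lemma interval_integral_pos_if_isCont:
  fixes f :: "real \<Rightarrow> real" and a b :: real
  assumes "a < b" "\<And>x. isCont f x" "\<And>x. 0 < f x"
  shows "0 < (LBINT x=a..b. f x)"
proof -
  have "\<exists>m. (\<forall>x. a \<le> x \<and> x \<le> b \<longrightarrow> m \<le> f x) \<and> (\<exists>x. a \<le> x \<and> x \<le> b \<and> f x = m)"
    using assms(1,2) by (intro isCont_eq_Lb) auto
  then obtain m where m: "\<And>x. a \<le> x \<Longrightarrow> x \<le> b \<Longrightarrow> m \<le> f x" and "0 < m"
    using assms(3) by metis
  have "0 < m * (b - a)"
    using \<open>0 < m\<close> assms(1) by simp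
  also have "\<dots> = (LBINT x=a..b. m)"
    by simp
  also have "\<dots> = (LBINT x:{a<..<b}. m)"
    using interval_integral_Ioo[of a b "\<lambda>x. m"] assms(1) by simp
  also have "\<dots> \<le> (LBINT x:{a<..<b}. f x)"
  proof (rule set_integral_mono)
    show "set_integrable lborel {a<..<b} (\<lambda>x. m)"
      using assms(1) by (intro set_integrable_bounded_measurable[where B="\<bar>m\<bar>"]) auto
    show "set_integrable lborel {a<..<b} f"
      by (rule set_integrable_if_locally_integrable[OF locally_integrable_isCont[OF assms(2)]])
  qed (use m in auto)
  also have "\<dots> = (LBINT x=a..b. f x)"
    using assms(1) by (simp add: interval_integral_Ioo)
  finally show ?thesis .
qed

lemma smooth_fun_interval_integral_deriv:
  fixes a b :: real
  assumes "smooth_fun f"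
  shows "(LBINT x=a..b. deriv f x) = f b - f a"
proof (rule interval_integral_FTC_finite)
  show "continuous_on {min a b..max a b} (deriv f)"
    using assms by (intro continuous_at_imp_continuous_on ballI smooth_fun_isCont_deriv)
  show "(f has_vector_derivative deriv f x) (at x within {min a b..max a b})" for x
    using smooth_fun_has_real_derivative[OF assms, of x]
    by (simp add: has_real_derivative_iff_has_vector_derivative has_vector_derivative_at_within)
qed

lemma periodic2pi_add_multiple:
  assumes "periodic2pi f"
  shows "f (x + 2 * pi * of_int k) = f x"
proof -
  have nat: "f (x + 2 * pi * real n) = f x" for x n
  proof (induction n)
    case (Suc n)
    have "f (x + 2 * pi * real (Suc n)) = f ((x + 2 * pi * real n) + 2 * pi)"
      by (simp add: algebra_simps)
    also have "\<dots> = f x"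
      using assms Suc by (simp add: periodic2pi_def)
    finally show ?case .
  qed simp
  show ?thesis
  proof (cases "0 \<le> k")
    case True
    then show ?thesis using nat[of x "nat k"] by simp
  next
    case False
    then show ?thesis using nat[of "x + 2 * pi * of_int k" "nat (- k)"] by simp
  qed
qed

lemma periodic2pi_const_if_const_on_period:
  assumes "periodic2pi f" and "\<And>x. -pi \<le> x \<Longrightarrow> x \<le> pi \<Longrightarrow> f x = f 0"
  shows "f x = f 0"
proof -
  define k where "k = \<lfloor>(x + pi) / (2 * pi)\<rfloor>"
  define y where "y = x - 2 * pi * of_int k"
  have "of_int k \<le> (x + pi) / (2 * pi)" "(x + pi) / (2 * pi) < of_int k + 1"
    unfolding k_def by linarith+
  then have "-pi \<le> y" "y \<le> pi"
    unfolding y_def by (auto simp: field_simps)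
  then have "f y = f 0" by (rule assms(2))
  moreover have "f x = f y"
    using periodic2pi_add_multiple[OF assms(1), of y k] by (simp add: y_def)
  ultimately show ?thesis by simp
qed

lemma interval_integral_shift:
  fixes f :: "real \<Rightarrow> real" and a b c :: real
  shows "(LBINT y=a+c..b+c. f y) = (LBINT y=a..b. f (y + c))"
proof -
  have *: "(LBINT y:{a+c<..<b+c}. f y) = (LBINT y:{a<..<b}. f (y + c))" for a b :: real
  proof -
    have "(LBINT y:{a+c<..<b+c}. f y) = (LBINT y. indicator {a+c<..<b+c} (c + 1 * y) *\<^sub>R f (c + 1 * y))"
      unfolding set_lebesgue_integral_def using lborel_integral_real_affine[of 1 _ c] by simp
    also have "\<dots> = (LBINT y:{a<..<b}. f (y + c))"
      unfolding set_lebesgue_integral_def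
      by (intro Bochner_Integration.integral_cong) (auto simp: add.commute split: split_indicator)
    finally show ?thesis .
  qed
  show ?thesis
  proof (cases "a \<le> b")
    case True
    then show ?thesis using * by (simp add: interval_integral_Ioo)
  next
    case False
    then show ?thesis using *[of b a] by (simp add: interval_lebesgue_integral_gt_eq)
  qed
qed

lemma interval_integral_periodic2pi:
  fixes x :: real
  assumes "locally_integrable f" and "periodic2pi f"
  shows "(LBINT y=0..x+2*pi. f y) = (LBINT y=0..x. f y) + (LBINT y=-pi..pi. f y)"
proof -
  note sum = locally_integrable_interval_integral_sum[OF assms(1)]
  have shift: "(LBINT y=a+2*pi..b+2*pi. f y) = (LBINT y=a..b. f y)" for a b
    using interval_integral_shift[where f=f and a=a and b=b and c="2*pi"] assms(2) by (simp add: periodic2pi_def)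
  have "(LBINT y=0..x+2*pi. f y)
      = (LBINT y=0..pi. f y) + (LBINT y=pi..0+2*pi. f y) + (LBINT y=0+2*pi..x+2*pi. f y)"
    using sum[of 0 pi "2*pi"] sum[of 0 "2*pi" "x+2*pi"] by (simp add: zero_ereal_def)
  also have "\<dots> = (LBINT y=0..pi. f y) + (LBINT y=-pi..0. f y) + (LBINT y=0..x. f y)"
    using shift[of "-pi" 0] shift[of 0 x] by (simp add: zero_ereal_def)
  finally show ?thesis using sum[of "-pi" 0 pi] by (simp add: zero_ereal_def)
qed

lemma periodic2pi_indefinite_integral:
  assumes "locally_integrable f" "periodic2pi f" "(LBINT y=-pi..pi. f y) = 0"
  shows "periodic2pi (\<lambda>x. LBINT y=0..x. f y)"
  using interval_integral_periodic2pi[OF assms(1,2)] assms(3) by (simp add: periodic2pi_def)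

lemma has_real_derivative_indefinite_integral:
  fixes c x :: real
  assumes "\<And>x. isCont f x"
  shows "((\<lambda>u. LBINT y=c..u. f y) has_real_derivative f x) (at x)"
proof -
  define a where "a = min c x - 1"
  define b where "b = max c x + 1"
  have "continuous_on {a..b} f" using assms by (simp add: continuous_at_imp_continuous_on)
  then have "((\<lambda>u. LBINT y=c..u. f y) has_vector_derivative f x) (at x within {a..b})"
    by (intro interval_integral_FTC2) (auto simp: a_def b_def)
  then have "((\<lambda>u. LBINT y=c..u. f y) has_vector_derivative f x) (at x within {a<..<b})"
    by (rule has_vector_derivative_within_subset) auto
  then have "((\<lambda>u. LBINT y=c..u. f y) has_vector_derivative f x) (at x)"
    by (subst (asm) has_vector_derivative_within_open) (auto simp: a_def b_def)
  then show ?thesis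
    by (simp add: has_real_derivative_iff_has_vector_derivative)
qed

lemma smooth_periodic2pi_antiderivative:
  assumes "smooth_fun f" "periodic2pi f" "(LBINT y=-pi..pi. f y) = 0"
  defines "F \<equiv> \<lambda>x. LBINT y=0..x. f y"
  shows "smooth_fun F" "periodic2pi F" "deriv F = f"
proof -
  have cont: "\<And>x. isCont f x"
    using assms(1) by (rule smooth_fun_isCont)
  have F': "\<And>x. (F has_real_derivative f x) (at x)"
    unfolding F_def using has_real_derivative_indefinite_integral[OF cont, of 0]
    by (simp add: zero_ereal_def)
  then show "deriv F = f" by (auto intro!: DERIV_imp_deriv)
  show "smooth_fun F"
    using assms(1) differentiable_upto_SucD[OF differentiable_upto_antiderivative[OF F']]
    unfolding smooth_fun_iff_differentiable_upto by blast
  show "periodic2pi F"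
    unfolding F_def by (rule periodic2pi_indefinite_integral[OF locally_integrable_isCont[OF cont] assms(2,3)])
qed

section \<open>Smooth approximations of indicators of arcs\<close>

lemma cos_less_cos_iff_abs_less:
  fixes d r :: real
  assumes "0 < r" "r \<le> pi" "\<bar>d\<bar> < 2 * pi - r"
  shows "cos r < cos d \<longleftrightarrow> \<bar>d\<bar> < r" and "cos d < cos r \<longleftrightarrow> r < \<bar>d\<bar>"
proof -
  have "cos d = cos \<bar>d\<bar>" by simp
  consider "\<bar>d\<bar> \<le> pi" | "pi < \<bar>d\<bar>" by linarith
  then have "(cos r < cos \<bar>d\<bar> \<longleftrightarrow> \<bar>d\<bar> < r) \<and> (cos \<bar>d\<bar> < cos r \<longleftrightarrow> r < \<bar>d\<bar>)"
  proof cases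
    case 1
    then show ?thesis
      using assms cos_mono_less_eq[of r "\<bar>d\<bar>"] cos_mono_less_eq[of "\<bar>d\<bar>" r] by simp
  next
    case 2
    have "cos \<bar>d\<bar> = cos (2 * pi - \<bar>d\<bar>)" by (simp add: cos_diff)
    also have "\<dots> < cos r" using assms 2 by (subst cos_mono_less_eq) auto
    finally show ?thesis using assms 2 by auto
  qed
  then show "cos r < cos d \<longleftrightarrow> \<bar>d\<bar> < r" and "cos d < cos r \<longleftrightarrow> r < \<bar>d\<bar>" by simp_all
qed

lemma tendsto_tanh_mult_sgn:
  fixes u :: real
  assumes "u \<noteq> 0"
  shows "(\<lambda>m. tanh (real m * u)) \<longlonglongrightarrow> sgn u"
proof -
  have pos: "(\<lambda>m. tanh (real m * v)) \<longlonglongrightarrow> 1" if "0 < v" for v :: real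
  proof -
    have "filterlim (\<lambda>m. real m * v) at_top sequentially"
      using filterlim_tendsto_pos_mult_at_top[OF tendsto_const that filterlim_real_sequentially]
      by (simp only: mult.commute)
    then show ?thesis by (rule filterlim_compose[OF tanh_real_at_top])
  qed
  show ?thesis
  proof (cases "0 < u")
    case True
    then show ?thesis using pos[of u] by simp
  next
    case False
    then have "(\<lambda>m. - tanh (real m * - u)) \<longlonglongrightarrow> - 1"
      using assms by (intro tendsto_minus pos) simp
    moreover have "sgn u = - 1" using False assms by (simp add: sgn_if)
    ultimately show ?thesis by simp
  qed
qed

text \<open>Since \<open>cos (x - (a + b) / 2) > cos ((b - a) / 2)\<close> holds exactly on the arc \<open>(a, b)\<close>
  of the circle, these functions approximate its indicator as \<open>m \<rightarrow> \<infinity>\<close>.\<close>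

definition smooth_indicator :: "real \<Rightarrow> real \<Rightarrow> nat \<Rightarrow> real \<Rightarrow> real" where
  "smooth_indicator a b m x = (1 + tanh (real m * (cos (x - (a + b) / 2) - cos ((b - a) / 2)))) / 2"

lemma smooth_fun_smooth_indicator: "smooth_fun (smooth_indicator a b m)"
proof -
  have inner: "differentiable_upto k (\<lambda>x. real m * (cos (x + - ((a + b) / 2)) + - cos ((b - a) / 2)))" for k
    by (intro differentiable_upto_mult differentiable_upto_add differentiable_upto_const differentiable_upto_ident
        differentiable_upto_compose[OF differentiable_upto_cos])
  have "differentiable_upto k
      (\<lambda>x. 1 / 2 * (1 + tanh (real m * (cos (x + - ((a + b) / 2)) + - cos ((b - a) / 2)))))" for k
    by (intro differentiable_upto_mult differentiable_upto_add differentiable_upto_const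
        differentiable_upto_compose[OF differentiable_upto_tanh inner])
  moreover have "smooth_indicator a b m
      = (\<lambda>x. 1 / 2 * (1 + tanh (real m * (cos (x + - ((a + b) / 2)) + - cos ((b - a) / 2)))))"
    by (simp add: fun_eq_iff smooth_indicator_def)
  ultimately show ?thesis
    by (simp add: smooth_fun_iff_differentiable_upto)
qed

lemma periodic2pi_smooth_indicator: "periodic2pi (smooth_indicator a b m)"
proof -
  have "cos (x + 2 * pi - (a + b) / 2) = cos (x - (a + b) / 2)" for x
    using cos_periodic[of "x - (a + b) / 2"] by (simp add: algebra_simps)
  then show ?thesis by (simp add: periodic2pi_def smooth_indicator_def)
qed

lemma smooth_indicator_bounds: "0 \<le> smooth_indicator a b m x" "smooth_indicator a b m x \<le> 1"
  using tanh_real_bounds[of "real m * (cos (x - (a + b) / 2) - cos ((b - a) / 2))"]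
  by (auto simp: smooth_indicator_def)

lemma borel_measurable_smooth_indicator [measurable]: "smooth_indicator a b m \<in> borel_measurable borel"
  by (intro borel_measurable_isCont smooth_fun_isCont smooth_fun_smooth_indicator)

lemma tendsto_smooth_indicator:
  assumes "-pi \<le> a" "a < b" "b \<le> pi" and "-pi < x" "x < pi" "x \<noteq> a" "x \<noteq> b"
  shows "(\<lambda>m. smooth_indicator a b m x) \<longlonglongrightarrow> indicator {a<..<b} x"
proof -
  define r where "r = (b - a) / 2"
  define d where "d = x - (a + b) / 2"
  have r: "0 < r" "r \<le> pi"
    using assms unfolding r_def by auto
  have d_less: "\<bar>d\<bar> < 2 * pi - r"
    using assms unfolding r_def d_def abs_less_iff by (auto simp: field_simps)
  have d_ne: "\<bar>d\<bar> \<noteq> r"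
    using assms(6,7) unfolding r_def d_def abs_eq_iff by (auto simp: field_simps)
  have inside: "a < x \<and> x < b \<longleftrightarrow> \<bar>d\<bar> < r"
    unfolding r_def d_def abs_less_iff by (auto simp: field_simps)
  note cos_iff = cos_less_cos_iff_abs_less[OF r d_less]
  have "cos d - cos r \<noteq> 0"
    using cos_iff d_ne by auto
  then have "(\<lambda>m. (1 + tanh (real m * (cos d - cos r))) / 2) \<longlonglongrightarrow> (1 + sgn (cos d - cos r)) / 2"
    by (intro tendsto_intros tendsto_tanh_mult_sgn) simp_all
  moreover have "(1 + sgn (cos d - cos r)) / 2 = indicator {a<..<b} x"
    using cos_iff d_ne inside by (auto simp: sgn_if indicator_def)
  ultimately show ?thesis
    unfolding smooth_indicator_def r_def[symmetric] d_def[symmetric] by simp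
qed

lemma tendsto_integral_smooth_indicator:
  fixes h :: "real \<Rightarrow> real"
  assumes h: "set_integrable lborel {-pi<..<pi} h" and ab: "-pi \<le> a" "a < b" "b \<le> pi"
  shows "(\<lambda>m. LBINT x=-pi..pi. h x * smooth_indicator a b m x)
           \<longlonglongrightarrow> (LBINT x=-pi..pi. h x * indicator {a<..<b} x)"
proof -
  let ?H = "\<lambda>x. indicator {-pi<..<pi} x *\<^sub>R h x"
  have H: "integrable lborel ?H"
    using h by (simp add: set_integrable_def)
  have "(\<lambda>m. LBINT x. ?H x * smooth_indicator a b m x) \<longlonglongrightarrow> (LBINT x. ?H x * indicator {a<..<b} x)"
  proof (rule integral_dominated_convergence[where w="\<lambda>x. norm (?H x)"])
    show "(\<lambda>x. ?H x * indicator {a<..<b} x) \<in> borel_measurable lborel"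
      using borel_measurable_integrable[OF H] by (intro borel_measurable_times) auto
    show "(\<lambda>x. ?H x * smooth_indicator a b m x) \<in> borel_measurable lborel" for m
      using borel_measurable_integrable[OF H] by measurable
    show "integrable lborel (\<lambda>x. norm (?H x))"
      using H by simp
    show "AE x in lborel. norm (?H x * smooth_indicator a b m x) \<le> norm (?H x)" for m
      using smooth_indicator_bounds[of a b m] by (auto simp: abs_mult intro!: mult_left_le)
    have "AE x in lborel. x \<noteq> a \<and> x \<noteq> b"
      using AE_lborel_singleton[of a] AE_lborel_singleton[of b] by eventually_elim auto
    then show "AE x in lborel. (\<lambda>m. ?H x * smooth_indicator a b m x) \<longlonglongrightarrow> ?H x * indicator {a<..<b} x"
    proof eventually_elim
      case (elim x)
      show ?case
      proof (cases "-pi < x \<and> x < pi")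
        case True
        then show ?thesis using elim by (intro tendsto_intros tendsto_smooth_indicator ab) auto
      qed simp
    qed
  qed
  then show ?thesis
    by (simp add: interval_integral_Ioo set_lebesgue_integral_def mult.assoc)
qed

section \<open>Functions with vanishing interval integrals\<close>

lemma AE_eq_0_if_integrals_greaterThan_eq_0:
  fixes F :: "real \<Rightarrow> real"
  assumes F: "integrable lborel F" and integrals: "\<And>x. (LBINT y:{x<..}. F y) = 0"
  shows "AE x in lborel. F x = 0"
proof -
  have F_meas [measurable]: "F \<in> borel_measurable borel"
    using F by (simp add: borel_measurable_integrable)
  have max_int: "integrable lborel (\<lambda>y. max 0 (G y))" if "integrable lborel G" for G :: "real \<Rightarrow> real"
  proof (rule Bochner_Integration.integrable_bound[OF integrable_norm[OF that]])
    have [measurable]: "G \<in> borel_measurable borel"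
      using that by (simp add: borel_measurable_integrable)
    show "(\<lambda>y. max 0 (G y)) \<in> borel_measurable lborel" by measurable
  qed auto
  define dens where "dens G = density lborel (\<lambda>x. ennreal (max 0 (G x)))" for G :: "real \<Rightarrow> real"
  have emeasure_dens: "emeasure (dens G) A = ennreal (LBINT y:A. max 0 (G y))"
    if G: "integrable lborel G" and A [measurable]: "A \<in> sets borel" for G A
  proof -
    have [measurable]: "G \<in> borel_measurable borel"
      using G by (simp add: borel_measurable_integrable)
    have int: "integrable lborel (\<lambda>y. indicator A y * max 0 (G y))"
      by (rule Bochner_Integration.integrable_bound[OF integrable_norm[OF G]])
        (auto split: split_indicator)
    have "emeasure (dens G) A = (\<integral>\<^sup>+y. ennreal (indicator A y * max 0 (G y)) \<partial>lborel)"
      unfolding dens_def by (subst emeasure_density) (auto intro!: nn_integral_cong split: split_indicator)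
    also have "\<dots> = ennreal (LBINT y:A. max 0 (G y))"
      using int by (subst nn_integral_eq_integral) (auto simp: set_lebesgue_integral_def)
    finally show ?thesis .
  qed
  \<comment> \<open>The positive and negative parts of \<open>F\<close> are densities of finite measures that agree on all rays.\<close>
  have "dens F = dens (\<lambda>x. - F x)"
  proof (rule measure_eqI_lessThan)
    show "sets (dens F) = sets borel" "sets (dens (\<lambda>x. - F x)) = sets borel"
      by (simp_all add: dens_def)
    show "emeasure (dens F) {x<..} < \<infinity>" for x
      using emeasure_dens[OF F] by simp
    show "emeasure (dens F) {x<..} = emeasure (dens (\<lambda>x. - F x)) {x<..}" for x
    proof -
      have pos_part: "set_integrable lborel {x<..} (\<lambda>y. max 0 (G y))"
        if "integrable lborel G" for G :: "real \<Rightarrow> real"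
        unfolding set_integrable_def using max_int[OF that] by (intro integrable_mult_indicator) auto
      have "(LBINT y:{x<..}. max 0 (F y)) - (LBINT y:{x<..}. max 0 (- F y))
          = (LBINT y:{x<..}. max 0 (F y) - max 0 (- F y))"
        using pos_part[OF F] pos_part[OF integrable_minus[OF F]] by (rule set_integral_diff(2)[symmetric])
      also have "\<dots> = (LBINT y:{x<..}. F y)"
        by (rule set_lebesgue_integral_cong) auto
      finally show ?thesis
        using integrals[of x] emeasure_dens[OF F] emeasure_dens[OF integrable_minus[OF F]] by simp
    qed
  qed
  then have "AE x in lborel. ennreal (max 0 (F x)) = ennreal (max 0 (- F x))"
    unfolding dens_def by (intro sigma_finite_measure.density_unique[OF sigma_finite_lborel]) auto
  then show ?thesis
    by eventually_elim (auto simp: max_def split: if_splits)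
qed

lemma AE_eq_0_on_interval_if_interval_integrals_eq_0:
  fixes f :: "real \<Rightarrow> real" and l u :: real
  assumes f: "set_integrable lborel {l<..<u} f"
    and integrals: "\<And>a b. l \<le> a \<Longrightarrow> a < b \<Longrightarrow> b \<le> u \<Longrightarrow> (LBINT x=a..b. f x) = 0"
  shows "AE x in lborel. l < x \<and> x < u \<longrightarrow> f x = 0"
proof -
  define F where "F = (\<lambda>x. indicator {l<..<u} x * f x)"
  have "AE x in lborel. F x = 0"
  proof (rule AE_eq_0_if_integrals_greaterThan_eq_0)
    show "integrable lborel F"
      using f by (simp add: set_integrable_def F_def)
    fix x
    define a where "a = max x l"
    have "(LBINT y:{x<..}. F y) = (LBINT y:{a<..<u}. f y)"
      unfolding set_lebesgue_integral_def F_def a_def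
      by (intro Bochner_Integration.integral_cong) (auto split: split_indicator)
    also have "\<dots> = 0"
    proof (cases "a < u")
      case True
      then have "(LBINT y:{a<..<u}. f y) = (LBINT y=a..u. f y)"
        by (simp add: interval_integral_Ioo)
      then show ?thesis using True integrals[of a u] by (simp add: a_def)
    qed (simp add: set_lebesgue_integral_def)
    finally show "(LBINT y:{x<..}. F y) = 0" .
  qed
  then show ?thesis
    by eventually_elim (simp add: F_def indicator_def)
qed

lemma AE_eq_0_if_interval_integrals_eq_0:
  fixes f :: "real \<Rightarrow> real"
  assumes f: "locally_integrable f" and integrals: "\<And>a b. a < b \<Longrightarrow> (LBINT x=ereal a..ereal b. f x) = 0"
  shows "AE x in lborel. f x = 0"
proof -
  have "AE x in lborel. - real n < x \<and> x < real n \<longrightarrow> f x = 0" for n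
    by (rule AE_eq_0_on_interval_if_interval_integrals_eq_0
        [OF set_integrable_if_locally_integrable[OF f] integrals])
  then have "AE x in lborel. \<forall>n. - real n < x \<and> x < real n \<longrightarrow> f x = 0"
    unfolding AE_all_countable by blast
  then show ?thesis
  proof eventually_elim
    case (elim x)
    obtain n :: nat where "\<bar>x\<bar> < real n" using reals_Archimedean2 by blast
    then have "- real n < x \<and> x < real n" by linarith
    with elim show ?case by blast
  qed
qed

section \<open>A periodic du Bois-Reymond lemma\<close>

lemma integral_mult_smooth_periodic2pi:
  fixes h f :: "real \<Rightarrow> real"
  assumes h: "set_integrable lborel {-pi<..<pi} h"
    and orth: "\<And>\<psi>. smooth_fun \<psi> \<Longrightarrow> periodic2pi \<psi> \<Longrightarrow> (LBINT x=-pi..pi. h x * deriv \<psi> x) = 0"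
    and f: "smooth_fun f" "periodic2pi f"
  shows "(LBINT x=-pi..pi. h x * f x) = (LBINT x=-pi..pi. f x) * (LBINT x=-pi..pi. h x) / (2 * pi)"
proof -
  define c where "c = (LBINT x=-pi..pi. f x) / (2 * pi)"
  have f_cont: "\<And>x. isCont f x"
    using f(1) by (rule smooth_fun_isCont)
  have f_int: "interval_lebesgue_integrable lborel (ereal (-pi)) (ereal pi) f"
    using locally_integrable_isCont[OF f_cont] by (simp add: locally_integrable_def)
  have hf_int: "interval_lebesgue_integrable lborel (ereal (-pi)) (ereal pi) (\<lambda>x. h x * f x)"
    using set_integrable_mult_isCont[OF h f_cont] by (simp add: interval_lebesgue_integrable_def)
  have h_int: "interval_lebesgue_integrable lborel (ereal (-pi)) (ereal pi) h"
    using h by (simp add: interval_lebesgue_integrable_def)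
  define \<psi> :: "real \<Rightarrow> real" where "\<psi> x = (LBINT y=0..x. f y - c)" for x
  have "smooth_fun (\<lambda>x. f x - c)"
    using f(1) differentiable_upto_add[OF _ differentiable_upto_const, of _ f "- c"]
    by (simp add: smooth_fun_iff_differentiable_upto)
  moreover have "periodic2pi (\<lambda>x. f x - c)"
    using f(2) by (simp add: periodic2pi_def)
  moreover have "(LBINT x=-pi..pi. f x - c) = 0"
    using f_int by (simp add: c_def)
  ultimately have "smooth_fun \<psi>" "periodic2pi \<psi>" "deriv \<psi> = (\<lambda>x. f x - c)"
    using smooth_periodic2pi_antiderivative[of "\<lambda>x. f x - c"] unfolding \<psi>_def by simp_all
  then have "0 = (LBINT x=-pi..pi. h x * (f x - c))"
    using orth[of \<psi>] by simp
  also have "\<dots> = (LBINT x=-pi..pi. h x * f x) - c * (LBINT x=-pi..pi. h x)"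
    using hf_int h_int by (simp add: right_diff_distrib mult.commute)
  finally show ?thesis by (simp add: c_def)
qed

lemma du_Bois_Reymond_periodic2pi:
  fixes h :: "real \<Rightarrow> real"
  assumes h: "set_integrable lborel {-pi<..<pi} h"
    and orth: "\<And>\<psi>. smooth_fun \<psi> \<Longrightarrow> periodic2pi \<psi> \<Longrightarrow> (LBINT x=-pi..pi. h x * deriv \<psi> x) = 0"
  shows "AE x in lborel. -pi < x \<and> x < pi \<longrightarrow> h x = (LBINT y=-pi..pi. h y) / (2 * pi)"
proof -
  define c where "c = (LBINT y=-pi..pi. h y) / (2 * pi)"
  have one: "set_integrable lborel {-pi<..<pi} (\<lambda>x. 1 :: real)"
    by (intro set_integrable_bounded_measurable[where B=1]) auto
  have "(LBINT x=a..b. h x - c) = 0" if ab: "-pi \<le> a" "a < b" "b \<le> pi" for a b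
  proof -
    have eq: "(LBINT x=-pi..pi. h x * smooth_indicator a b m x)
        = (LBINT x=-pi..pi. 1 * smooth_indicator a b m x) * c" for m
      using integral_mult_smooth_periodic2pi[OF h orth smooth_fun_smooth_indicator
          periodic2pi_smooth_indicator] by (simp add: c_def)
    have "(\<lambda>m. LBINT x=-pi..pi. h x * smooth_indicator a b m x)
        \<longlonglongrightarrow> (LBINT x=-pi..pi. 1 * indicator {a<..<b} x) * c"
      unfolding eq by (intro tendsto_mult_right tendsto_integral_smooth_indicator[OF one ab])
    with tendsto_integral_smooth_indicator[OF h ab]
    have "(LBINT x=-pi..pi. h x * indicator {a<..<b} x)
        = (LBINT x=-pi..pi. 1 * indicator {a<..<b} x) * c"
      by (rule LIMSEQ_unique)
    then have "(LBINT x=a..b. h x) = (b - a) * c"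
      using ab interval_integral_mult_indicator[of "-pi" a b pi h]
        interval_integral_mult_indicator[of "-pi" a b pi "\<lambda>x. 1"] by simp
    moreover have "interval_lebesgue_integrable lborel (ereal a) (ereal b) h"
      using ab by (auto simp: interval_lebesgue_integrable_def intro: set_integrable_subset[OF h])
    ultimately show ?thesis by simp
  qed
  moreover have "set_integrable lborel {-pi<..<pi} (\<lambda>x. h x - c)"
    using h set_integrable_mult_right[OF one, of c] by (intro set_integral_diff) auto
  ultimately have "AE x in lborel. -pi < x \<and> x < pi \<longrightarrow> h x - c = 0"
    by (intro AE_eq_0_on_interval_if_interval_integrals_eq_0) auto
  then show ?thesis
    by (simp add: c_def)
qed

section \<open>Weak solutions of the second equation\<close>

lemma borel_measurable_lam [measurable]: "lam \<in> borel_measurable borel"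
  unfolding lam_def[abs_def] Let_def by measurable

lemma periodic2pi_lam: "periodic2pi lam"
proof -
  have "\<lfloor>(x + 2 * pi + pi) / (2 * pi)\<rfloor> = \<lfloor>(x + pi) / (2 * pi)\<rfloor> + 1" for x
    using floor_add_int[of "(x + pi) / (2 * pi)" 1] by (simp add: field_simps)
  then show ?thesis
    unfolding periodic2pi_def lam_def Let_def by (simp add: algebra_simps)
qed

lemma lam_eq:
  assumes "-pi < x" "x < pi"
  shows "lam x = (if x < 0 then -1 else if 0 < x then 1 else 0)"
proof -
  have "\<lfloor>(x + pi) / (2 * pi)\<rfloor> = 0"
    using assms by (simp add: floor_eq_iff field_simps)
  then show ?thesis using assms unfolding lam_def Let_def by auto
qed

lemma abs_lam_le_1: "\<bar>lam x\<bar> \<le> 1"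
  unfolding lam_def Let_def by auto

lemma AE_eq_weak_derivative_periodic2pi:
  fixes w dw f :: "real \<Rightarrow> real"
  assumes w: "periodic2pi w" and w_int: "\<And>(a::real) (b::real). w b - w a = (LBINT x=a..b. dw x)"
    and dw: "locally_integrable dw" "dw \<in> borel_measurable borel"
    and f: "periodic2pi f" "locally_integrable f" "f \<in> borel_measurable borel"
    and eq: "AE x in lborel. -pi < x \<and> x < pi \<longrightarrow> dw x = f x"
  shows "(LBINT x=-pi..pi. f x) = 0" and "AE x in lborel. dw x = f x"
proof -
  have int_eq: "(LBINT x=a..b. dw x) = (LBINT x=a..b. f x)" if "-pi \<le> a" "a \<le> b" "b \<le> pi" for a b :: real
  proof (rule interval_integral_cong_AE)
    show "AE x \<in> einterval (min (ereal a) (ereal b)) (max (ereal a) (ereal b)) in lborel. dw x = f x"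
      using eq by eventually_elim (use that in \<open>auto simp: einterval_iff min_def max_def\<close>)
  qed (use dw f in auto)
  have "w pi = w (-pi)"
    using w unfolding periodic2pi_def by (metis add.commute minus_add_cancel mult_2 add.assoc)
  then show zero: "(LBINT x=-pi..pi. f x) = 0"
    using int_eq[of "-pi" pi] w_int[where a="-pi" and b=pi] by simp
  define F where "F = (\<lambda>x. LBINT y=0..x. f y)"
  have F_diff: "F b - F a = (LBINT x=a..b. f x)" for a b :: real
    using locally_integrable_interval_integral_sum[OF f(2), of 0 a b] by (simp add: F_def zero_ereal_def)
  define V where "V = (\<lambda>x. w x - F x)"
  have V_diff: "V b - V a = (LBINT x=a..b. dw x) - (LBINT x=a..b. f x)" for a b :: real
    using w_int[where a=a and b=b] F_diff[where a=a and b=b] by (simp add: V_def)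
  have V_const: "V x = V 0" for x
  proof (rule periodic2pi_const_if_const_on_period)
    show "periodic2pi V"
      using w periodic2pi_indefinite_integral[OF f(2,1) zero] by (simp add: periodic2pi_def V_def F_def)
    show "V x = V 0" if "-pi \<le> x" "x \<le> pi" for x
      using that V_diff[where a=0 and b=x] V_diff[where a=x and b=0] int_eq[of 0 x] int_eq[of x 0] by (cases "0 \<le> x") auto
  qed
  have "AE x in lborel. dw x - f x = 0"
  proof (rule AE_eq_0_if_interval_integrals_eq_0[OF locally_integrable_diff[OF dw(1) f(2)]])
    fix a b :: real
    have "(LBINT x=a..b. dw x - f x) = V b - V a"
      using dw(1) f(2) V_diff[where a=a and b=b] by (simp add: locally_integrable_def)
    then show "(LBINT x=a..b. dw x - f x) = 0"
      using V_const[of a] V_const[of b] by simp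
  qed
  then show "AE x in lborel. dw x = f x" by simp
qed

lemma AE_eq_lam_plus_const_if_weak_derivative_jumps:
  fixes g :: "real \<Rightarrow> real" and A :: real
  assumes g: "set_integrable lborel {-pi<..<pi} g"
    and jumps: "\<And>\<psi>. smooth_fun \<psi> \<Longrightarrow> periodic2pi \<psi> \<Longrightarrow>
      - (LBINT x=-pi..pi. g x * deriv \<psi> x) = 2 * A * (\<psi> 0 - \<psi> pi)"
  shows "\<exists>c. AE x in lborel. -pi < x \<and> x < pi \<longrightarrow> g x = A * lam x + c"
proof -
  define h where "h = (\<lambda>x. g x - 2 * A * indicator {0<..<pi} x)"
  have step: "set_integrable lborel {-pi<..<pi} (\<lambda>x. 2 * A * indicator {0<..<pi} x :: real)"
    by (intro set_integrable_bounded_measurable[where B="\<bar>2 * A\<bar>"]) (auto split: split_indicator)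
  have "(LBINT x=-pi..pi. h x * deriv \<psi> x) = 0" if \<psi>: "smooth_fun \<psi>" "periodic2pi \<psi>" for \<psi>
  proof -
    note cont = smooth_fun_isCont_deriv[OF \<psi>(1)]
    have g_int: "interval_lebesgue_integrable lborel (-pi) pi (\<lambda>x. g x * deriv \<psi> x)"
      using set_integrable_mult_isCont[OF g cont] by (simp add: interval_lebesgue_integrable_def)
    have step_int: "interval_lebesgue_integrable lborel (-pi) pi
        (\<lambda>x. 2 * A * (deriv \<psi> x * indicator {0<..<pi} x))"
      using set_integrable_mult_isCont[OF step cont] by (simp add: interval_lebesgue_integrable_def mult_ac)
    have "(LBINT x=-pi..pi. h x * deriv \<psi> x)
        = (LBINT x=-pi..pi. g x * deriv \<psi> x - 2 * A * (deriv \<psi> x * indicator {0<..<pi} x))"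
      by (simp add: h_def algebra_simps)
    also have "\<dots> = (LBINT x=-pi..pi. g x * deriv \<psi> x)
        - 2 * A * (LBINT x=-pi..pi. deriv \<psi> x * indicator {0<..<pi} x)"
      using g_int step_int by simp
    also have "(LBINT x=-pi..pi. deriv \<psi> x * indicator {0<..<pi} x) = \<psi> pi - \<psi> 0"
      using interval_integral_mult_indicator[of "-pi" 0 pi pi] smooth_fun_interval_integral_deriv[OF \<psi>(1)]
      by simp
    finally show ?thesis
      using jumps[OF \<psi>] by (simp add: algebra_simps)
  qed
  then have "AE x in lborel. -pi < x \<and> x < pi \<longrightarrow> h x = (LBINT y=-pi..pi. h y) / (2 * pi)"
    using du_Bois_Reymond_periodic2pi[of h] g step by (simp add: h_def set_integral_diff(1))
  moreover have "AE x in lborel. x \<noteq> 0"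
    by (rule AE_lborel_singleton)
  ultimately have "AE x in lborel. -pi < x \<and> x < pi \<longrightarrow>
      g x = A * lam x + (A + (LBINT y=-pi..pi. h y) / (2 * pi))"
    by eventually_elim (auto simp: h_def lam_eq indicator_def)
  then show ?thesis by blast
qed

lemma const_eq_if_weighted_interval_integral_eq_0:
  fixes N :: "real \<Rightarrow> real" and A c :: real
  assumes N: "\<And>x. isCont N x" "\<And>x. 0 < N x"
    and zero: "(LBINT x=-pi..pi. (A * lam x + c) * (2 * N x)) = 0"
  shows "c = A * (- (LBINT y=-pi..pi. lam y * N y) / (LBINT y=-pi..pi. N y))"
proof -
  define L where "L = (LBINT y=-pi..pi. lam y * N y)"
  define M where "M = (LBINT y=-pi..pi. N y)"
  have lam_N: "locally_integrable (\<lambda>x. lam x * N x)"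
    by (intro locally_integrable_mult_isCont locally_integrable_bounded_measurable[where B=1]
        N borel_measurable_lam AE_I2 abs_lam_le_1)
  have "(LBINT x=-pi..pi. (A * lam x + c) * (2 * N x))
      = (LBINT x=-pi..pi. 2 * A * (lam x * N x) + 2 * c * N x)"
    by (simp add: algebra_simps)
  also have "\<dots> = 2 * A * L + 2 * c * M"
    using lam_N locally_integrable_isCont[OF N(1)]
    by (simp add: L_def M_def locally_integrable_def)
  finally have "2 * A * L + 2 * c * M = 0"
    using zero by simp
  moreover have "0 < M"
    unfolding M_def using N by (intro interval_integral_pos_if_isCont) auto
  ultimately show ?thesis
    by (simp add: L_def[symmetric] M_def[symmetric] field_simps)
qed

lemma AE_eq_lam_plus_gamma_if_weak_derivative_jumps:
  fixes N w dw :: "real \<Rightarrow> real" and A :: real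
  assumes N: "\<And>x. isCont N x" "periodic2pi N" "\<And>x. 0 < N x"
    and w: "periodic2pi w" "dw \<in> borel_measurable borel" "locally_integrable dw"
      "\<And>(a::real) (b::real). w b - w a = (LBINT x=a..b. dw x)"
    and jumps: "\<And>\<psi>. smooth_fun \<psi> \<Longrightarrow> periodic2pi \<psi> \<Longrightarrow>
      - (LBINT x=-pi..pi. dw x / (2 * N x) * deriv \<psi> x) = 2 * A * (\<psi> 0 - \<psi> pi)"
  shows "AE x in lborel.
    dw x / (2 * N x) = A * (lam x + (- (LBINT y=-pi..pi. lam y * N y) / (LBINT y=-pi..pi. N y)))"
proof -
  have N_ne: "N x \<noteq> 0" for x
    using N(3)[of x] by simp
  have "locally_integrable (\<lambda>x. dw x * (1 / (2 * N x)))"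
    by (intro locally_integrable_mult_isCont[OF w(3)] continuous_intros N(1)) (simp add: N_ne)
  then obtain c where c: "AE x in lborel. -pi < x \<and> x < pi \<longrightarrow> dw x / (2 * N x) = A * lam x + c"
    using AE_eq_lam_plus_const_if_weak_derivative_jumps[OF _ jumps] set_integrable_if_locally_integrable
    by fastforce
  define f where "f = (\<lambda>x. (A * lam x + c) * (2 * N x))"
  have "locally_integrable (\<lambda>x. A * lam x + c)"
    by (rule locally_integrable_bounded_measurable[where B="\<bar>A\<bar> + \<bar>c\<bar>"])
      (auto intro!: AE_I2 order.trans[OF abs_triangle_ineq] simp: abs_mult mult_left_le abs_lam_le_1)
  then have f_loc: "locally_integrable f"
    unfolding f_def by (intro locally_integrable_mult_isCont continuous_intros N(1))
  have f_per: "periodic2pi f"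
    using N(2) periodic2pi_lam by (simp add: periodic2pi_def f_def)
  have f_meas: "f \<in> borel_measurable borel"
    unfolding f_def using borel_measurable_isCont[OF N(1)] by measurable
  have "AE x in lborel. -pi < x \<and> x < pi \<longrightarrow> dw x = f x"
    using c by eventually_elim (auto simp: f_def field_simps N_ne)
  note periodic = AE_eq_weak_derivative_periodic2pi[OF w(1,4,3,2) f_per f_loc f_meas this]
  have c_eq: "c = A * (- (LBINT y=-pi..pi. lam y * N y) / (LBINT y=-pi..pi. N y))"
    using periodic(1) unfolding f_def by (rule const_eq_if_weighted_interval_integral_eq_0[OF N(1,3)])
  from periodic(2) show ?thesis
  proof eventually_elim
    case (elim x)
    then have "dw x / (2 * N x) = A * lam x + c"
      using N_ne[of x] by (simp add: f_def)
    then show ?case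
      by (simp add: c_eq algebra_simps)
  qed
qed

theorem proposition3p7:
  fixes n :: nat and q \<kappa> t \<eta> \<mu> :: real
    and N \<phi> d\<phi> dd\<phi> w dw :: "real \<Rightarrow> real"
  assumes n: "n \<ge> 3"
    and q_def: "q = 2 * real n / (real n - 2)"
    and kappa_def: "\<kappa> = (real n - 1) / real n"
    and N_smooth: "smooth_fun N" and N_per: "periodic2pi N" and N_pos: "\<forall>x. N x > 0"
    and phi_per: "periodic2pi \<phi>" and phi_pos: "\<forall>x. \<phi> x > 0"
    and phi_d: "\<forall>x. (\<phi> has_real_derivative d\<phi> x) (at x)"
    and phi_dd: "weak_deriv_Linf d\<phi> dd\<phi>"
    and w_per: "periodic2pi w"
    and w_d: "weak_deriv_Linf w dw"
    and eq1: "AE x in lborel.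
        - 2 * \<kappa> * q * dd\<phi> x - 2 * \<eta>\<^sup>2 * \<phi> x powr (- q - 1)
        - \<kappa> * (\<mu> + dw x / (2 * N x))\<^sup>2 * \<phi> x powr (- q - 1)
        + \<kappa> * (t + lam x)\<^sup>2 * \<phi> x powr (q - 1) = 0"
    and eq2: "\<forall>\<psi>. smooth_fun \<psi> \<and> periodic2pi \<psi> \<longrightarrow>
        - (LBINT x=-pi..pi. dw x / (2 * N x) * deriv \<psi> x)
          = 2 * (\<phi> 0 powr q * \<psi> 0 - \<phi> pi powr q * \<psi> pi)"
  shows "AE x in lborel.
     dw x / (2 * N x) = \<phi> 0 powr q *
        (lam x + (- (LBINT y=-pi..pi. lam y * N y) / (LBINT y=-pi..pi. N y)))"
proof -
  have "\<phi> pi powr q = \<phi> 0 powr q"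
    using eq2[rule_format, of "\<lambda>x. 1"]
    by (simp add: smooth_fun_iff_differentiable_upto differentiable_upto_const periodic2pi_def)
  then have jumps: "- (LBINT x=-pi..pi. dw x / (2 * N x) * deriv \<psi> x) = 2 * \<phi> 0 powr q * (\<psi> 0 - \<psi> pi)"
    if "smooth_fun \<psi>" "periodic2pi \<psi>" for \<psi>
    using eq2 that by (simp add: algebra_simps)
  show ?thesis
    using N_pos by (intro AE_eq_lam_plus_gamma_if_weak_derivative_jumps[OF smooth_fun_isCont[OF N_smooth]
        N_per _ w_per weak_deriv_LinfD[OF w_d] jumps]) auto
qed

end
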